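(* Let $K=2$, $M\ge2$, $N\ge1$, and let $c>0$, $\gamma>0$, $p>0$, $\sigma^2>0$. Define, for $k\in\{1,2\}$, $$\mathrm{SINR}_k^{(NL)}=\frac{p\big(c^2(MN^2+N^2+MN+N)+2c\gamma N(M+1)+\gamma^2(M+1)\big)}{p\big(c^2(N^2+MN)+2c\gamma N+\gamma^2\big)+\sigma^2(cN+\gamma)}$$ and $$\mathrm{SINR}_k^{(w)}=\frac{p(M+1)\gamma}{p\gamma+\sigma^2}.$$ Then $\mathrm{SINR}_k^{(NL)}>\mathrm{SINR}_k^{(w)}$ if and only if $$\frac{p}{\sigma^2}<\frac{N+1}{\gamma(M-1)}+\frac{1}{c(M-1)},$$ equivalently, if and only if $$N>\gamma\Big(\frac{p}{\sigma^2}(M-1)-\frac1c\Big)-1.$$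
   Context: $\mathrm{SINR}_k^{(NL)}$ is the approximate SINR of an RIS-aided massive MIMO system (MRC receiver) with pure-NLoS cascaded channels for two users with equal parameters $c_1=c_2=c$ (cascaded path-loss factor), $\gamma_1=\gamma_2=\gamma$ (direct-link path loss), and $p_1=p_2=p$ (transmit power). $\mathrm{SINR}_k^{(w)}$ is the corresponding approximate SINR without RIS. $M$ is the number of BS antennas, $N$ the number of RIS elements, and $\sigma^2$ the noise power. *)

theory Defs
  imports Complex_Main
begin

text \<open>Approximate SINR with RIS (pure NLoS cascaded channels), equal user parameters.
  Argument s2 is the noise power sigma^2.\<close>
definition SINR_NL :: "nat \<Rightarrow> nat \<Rightarrow> real \<Rightarrow> real \<Rightarrow> real \<Rightarrow> real \<Rightarrow> real" where
  "SINR_NL M N c \<gamma> p s2 =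
     (p * (c^2 * (real M * real N^2 + real N^2 + real M * real N + real N)
           + 2 * c * \<gamma> * real N * (real M + 1) + \<gamma>^2 * (real M + 1)))
     / (p * (c^2 * (real N^2 + real M * real N) + 2 * c * \<gamma> * real N + \<gamma>^2)
        + s2 * (c * real N + \<gamma>))"

definition SINR_w :: "nat \<Rightarrow> real \<Rightarrow> real \<Rightarrow> real \<Rightarrow> real" where
  "SINR_w M \<gamma> p s2 = p * (real M + 1) * \<gamma> / (p * \<gamma> + s2)"

end

theory Submission
  imports Defs
begin

text \<open>Both SINRs share the factor \<open>p (M + 1)\<close> in the numerator. After cross-multiplying,
  the difference of the two sides factors as \<open>c N\<close> times the affine expression
  \<open>\<sigma>\<^sup>2 (c (N + 1) + \<gamma>) - p \<gamma> c (M - 1)\<close>, so the RIS helps exactly when the latter is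
  positive; both stated conditions are rearrangements of this.\<close>

definition SINR_NL_gain :: "nat \<Rightarrow> real \<Rightarrow> real \<Rightarrow> real" where
  "SINR_NL_gain N c \<gamma> = c^2 * real N * (real N + 1) + 2 * c * \<gamma> * real N + \<gamma>^2"

definition SINR_NL_denom :: "nat \<Rightarrow> nat \<Rightarrow> real \<Rightarrow> real \<Rightarrow> real \<Rightarrow> real \<Rightarrow> real" where
  "SINR_NL_denom M N c \<gamma> p s2 =
     p * (c^2 * (real N^2 + real M * real N) + 2 * c * \<gamma> * real N + \<gamma>^2) + s2 * (c * real N + \<gamma>)"

lemma SINR_NL_factor:
  "SINR_NL M N c \<gamma> p s2 = p * (real M + 1) * SINR_NL_gain N c \<gamma> / SINR_NL_denom M N c \<gamma> p s2"
  unfolding SINR_NL_def SINR_NL_gain_def SINR_NL_denom_def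
  by (simp add: algebra_simps power2_eq_square)

lemma SINR_NL_denom_pos:
  assumes "c > 0" "\<gamma> > 0" "p > 0" "s2 > 0"
  shows "SINR_NL_denom M N c \<gamma> p s2 > 0"
  unfolding SINR_NL_denom_def using assms
  by (intro add_pos_pos mult_pos_pos add_nonneg_pos) auto

lemma SINR_cross_difference:
  "SINR_NL_gain N c \<gamma> * (p * \<gamma> + s2) - \<gamma> * SINR_NL_denom M N c \<gamma> p s2
     = c * real N * (s2 * (c * (real N + 1) + \<gamma>) - p * \<gamma> * c * (real M - 1))"
  unfolding SINR_NL_gain_def SINR_NL_denom_def by (simp add: algebra_simps power2_eq_square)

lemma SINR_NL_gt_SINR_w_iff:
  assumes "N \<ge> 1" "c > 0" "\<gamma> > 0" "p > 0" "s2 > 0"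
  shows "SINR_NL M N c \<gamma> p s2 > SINR_w M \<gamma> p s2 \<longleftrightarrow>
           p * \<gamma> * c * (real M - 1) < s2 * (c * (real N + 1) + \<gamma>)"
proof -
  let ?Q = "SINR_NL_gain N c \<gamma>" and ?B = "SINR_NL_denom M N c \<gamma> p s2"
  have B: "?B > 0" using SINR_NL_denom_pos assms by blast
  have D: "p * \<gamma> + s2 > 0" using assms by (simp add: add_pos_pos)
  have pM: "p * (real M + 1) > 0" using assms by simp
  have cN: "c * real N > 0" using assms by simp
  have "SINR_NL M N c \<gamma> p s2 > SINR_w M \<gamma> p s2 \<longleftrightarrow>
          p * (real M + 1) * (\<gamma> * ?B) < p * (real M + 1) * (?Q * (p * \<gamma> + s2))"
    unfolding SINR_NL_factor SINR_w_def using B D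
    by (simp add: divide_simps mult.commute mult.left_commute)
  also have "\<dots> \<longleftrightarrow> 0 < ?Q * (p * \<gamma> + s2) - \<gamma> * ?B"
    using pM by (simp only: mult_less_cancel_left_pos) linarith
  also have "\<dots> \<longleftrightarrow> p * \<gamma> * c * (real M - 1) < s2 * (c * (real N + 1) + \<gamma>)"
    unfolding SINR_cross_difference using cN by (metis zero_less_mult_pos diff_gt_0_iff_gt mult_pos_pos)
  finally show ?thesis .
qed

lemma power_ratio_threshold_iff:
  assumes "M \<ge> 2" "c > 0" "\<gamma> > 0" "s2 > 0"
  shows "p / s2 < (real N + 1) / (\<gamma> * (real M - 1)) + 1 / (c * (real M - 1)) \<longleftrightarrow>
           p * \<gamma> * c * (real M - 1) < s2 * (c * (real N + 1) + \<gamma>)"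
proof -
  define m where "m = real M - 1"
  have "m > 0" using assms(1) unfolding m_def by simp
  then show ?thesis unfolding m_def[symmetric] using assms(2-4)
    by (simp add: field_simps)
qed

lemma element_threshold_iff:
  assumes "c > 0" "s2 > 0"
  shows "real N > \<gamma> * (p / s2 * (real M - 1) - 1 / c) - 1 \<longleftrightarrow>
           p * \<gamma> * c * (real M - 1) < s2 * (c * (real N + 1) + \<gamma>)"
  using assms by (simp add: field_simps)

theorem corollary3:
  fixes M N :: nat and c \<gamma> p s2 :: real
  assumes "M \<ge> 2" and "N \<ge> 1"
    and "c > 0" and "\<gamma> > 0" and "p > 0" and "s2 > 0"
  shows "(SINR_NL M N c \<gamma> p s2 > SINR_w M \<gamma> p s2 \<longleftrightarrow>
            p / s2 < (real N + 1) / (\<gamma> * (real M - 1)) + 1 / (c * (real M - 1)))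
       \<and> (SINR_NL M N c \<gamma> p s2 > SINR_w M \<gamma> p s2 \<longleftrightarrow>
            real N > \<gamma> * (p / s2 * (real M - 1) - 1 / c) - 1)"
  using SINR_NL_gt_SINR_w_iff[OF assms(2-6)]
    power_ratio_threshold_iff[OF assms(1,3,4,6)] element_threshold_iff[OF assms(3,6)]
  by simp

end
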